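(* Let $(X^n)_{n\ge1}$ be a sequence of FK-spaces containing $\phi$ and let $Y=\bigcap_nX^n$ with its intersection FK-topology. Then $E(Y)=\bigcap_nE(X^n)$ for each of $E=D_p^qS,\ D_p^qW,\ D_p^qF,\ D_p^qB$.
   Context: An FK-space is a vector subspace of the space $w$ of all complex sequences with a complete metrizable locally convex topology in which coordinate functionals are continuous; $X'$ is its continuous dual. If $X^n$ has paranorm $\rho_n$ and seminorms $(s_{nk})_k$, then $Y=\bigcap_nX^n$ is an FK-space with paranorm $\sum_n\rho_n/(2^n(1+\rho_n))$ and seminorms $(s_{nk})_{n,k}$. $\delta^j$ has $1$ in position $j$, $0$ elsewhere; $\phi=\operatorname{span}\{\delta^j\}$. $p(n)<q(n)$ are nonnegative integer sequences with $q(n)\to\infty$. For $x\in w$, $x^{(k)}=\sum_{j=1}^kx_j\delta^j$ and $T_n(x)=\frac{1}{q(n)-p(n)}\sum_{k=p(n)+1}^{q(n)}x^{(k)}$. For an FK-space $X\supseteq\phi$: $D_p^qS(X)=\{x\in X: T_n(x)\to x\text{ in }X\}$; $D_p^qW(X)=\{x\in X: f(T_n(x))\to f(x)\ \forall f\in X'\}$; $D_p^qF(X)=\{x\in X:\lim_n f(T_n(x))\text{ exists }\forall f\in X'\}$; $D_p^qB(X)=\{x\in X:\sup_n|f(T_n(x))|<\infty\ \forall f\in X'\}$. *)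

theory Defs
  imports "HOL-Analysis.Analysis" "HOL-Library.Function_Algebras"
begin

type_synonym seqc = "nat \<Rightarrow> complex"

text \<open>Coordinates are indexed from 0 (the paper indexes from 1).\<close>

definition phi :: "seqc set" where
  "phi = {x. finite {j. x j \<noteq> 0}}"

definition FKtop :: "seqc set \<Rightarrow> ('i \<Rightarrow> seqc \<Rightarrow> real) \<Rightarrow> seqc topology" where
  "FKtop X s = topology (\<lambda>U. U \<subseteq> X \<and>
      (\<forall>x\<in>U. \<exists>F e. finite F \<and> e > 0 \<and> {y\<in>X. \<forall>i\<in>F. s i (y - x) < e} \<subseteq> U))"

definition FK_space :: "seqc set \<Rightarrow> ('i::countable \<Rightarrow> seqc \<Rightarrow> real) \<Rightarrow> bool" where
  "FK_space X s \<longleftrightarrow>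
     0 \<in> X \<and> (\<forall>x\<in>X. \<forall>y\<in>X. x + y \<in> X) \<and> (\<forall>c. \<forall>x\<in>X. (\<lambda>j. c * x j) \<in> X) \<and>
     (\<forall>i. \<forall>x\<in>X. s i x \<ge> 0) \<and>
     (\<forall>i. \<forall>x\<in>X. \<forall>y\<in>X. s i (x + y) \<le> s i x + s i y) \<and>
     (\<forall>i c. \<forall>x\<in>X. s i (\<lambda>j. c * x j) = cmod c * s i x) \<and>
     (\<forall>x\<in>X. (\<forall>i. s i x = 0) \<longrightarrow> x = 0) \<and>
     (\<forall>u. (\<forall>m. u m \<in> X) \<longrightarrow>
          (\<forall>i. \<forall>e>0. \<exists>N. \<forall>m\<ge>N. \<forall>n\<ge>N. s i (u m - u n) < e) \<longrightarrow>
          (\<exists>x\<in>X. \<forall>i. (\<lambda>m. s i (u m - x)) \<longlonglongrightarrow> 0)) \<and>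
     (\<forall>j. continuous_map (FKtop X s) euclidean (\<lambda>x. x j))"

definition FK_dual :: "seqc set \<Rightarrow> ('i \<Rightarrow> seqc \<Rightarrow> real) \<Rightarrow> (seqc \<Rightarrow> complex) set" where
  "FK_dual X s = {f. (\<forall>x\<in>X. \<forall>y\<in>X. f (x + y) = f x + f y) \<and>
                     (\<forall>c. \<forall>x\<in>X. f (\<lambda>j. c * x j) = c * f x) \<and>
                     continuous_map (FKtop X s) euclidean f}"

definition sect :: "nat \<Rightarrow> seqc \<Rightarrow> seqc" where
  "sect k x = (\<lambda>j. if j < k then x j else 0)"

definition Tmean :: "(nat \<Rightarrow> nat) \<Rightarrow> (nat \<Rightarrow> nat) \<Rightarrow> nat \<Rightarrow> seqc \<Rightarrow> seqc" where
  "Tmean p q n x = (\<lambda>j. (1 / of_nat (q n - p n)) * (\<Sum>k\<in>{p n<..q n}. sect k x j))"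

definition DS :: "(nat \<Rightarrow> nat) \<Rightarrow> (nat \<Rightarrow> nat) \<Rightarrow> seqc set \<Rightarrow> ('i \<Rightarrow> seqc \<Rightarrow> real) \<Rightarrow> seqc set" where
  "DS p q X s = {x\<in>X. limitin (FKtop X s) (\<lambda>n. Tmean p q n x) x sequentially}"

definition DW :: "(nat \<Rightarrow> nat) \<Rightarrow> (nat \<Rightarrow> nat) \<Rightarrow> seqc set \<Rightarrow> ('i \<Rightarrow> seqc \<Rightarrow> real) \<Rightarrow> seqc set" where
  "DW p q X s = {x\<in>X. \<forall>f\<in>FK_dual X s. (\<lambda>n. f (Tmean p q n x)) \<longlonglongrightarrow> f x}"

definition DF :: "(nat \<Rightarrow> nat) \<Rightarrow> (nat \<Rightarrow> nat) \<Rightarrow> seqc set \<Rightarrow> ('i \<Rightarrow> seqc \<Rightarrow> real) \<Rightarrow> seqc set" where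
  "DF p q X s = {x\<in>X. \<forall>f\<in>FK_dual X s. convergent (\<lambda>n. f (Tmean p q n x))}"

definition DB :: "(nat \<Rightarrow> nat) \<Rightarrow> (nat \<Rightarrow> nat) \<Rightarrow> seqc set \<Rightarrow> ('i \<Rightarrow> seqc \<Rightarrow> real) \<Rightarrow> seqc set" where
  "DB p q X s = {x\<in>X. \<forall>f\<in>FK_dual X s. bounded (range (\<lambda>n. f (Tmean p q n x)))}"

end

theory Submission
  imports Defs
begin

(* For D_p^qS the claim is immediate: the topology of Y is generated by the seminorms of all the
   X^n together, so T_n x tends to x in Y iff it does in every X^n.
   For the weak notions the point is a description of the dual: every f in Y' is a finite sum of
   restrictions of functionals g_m in (X^m)', and every such restriction lies in Y'. Continuity
   of f gives |f y| <= sum_{m in A} q_m y with finitely many m and continuous seminorms q_m of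
   X^m. Embedding Y diagonally into the product of the X^m, Hahn-Banach extends f to a functional
   on the product dominated by sum_{m in A} q_m (z_m); its restrictions to the factors are the
   g_m. Convergence to f x, convergence and boundedness of (f (T_n x))_n are preserved by finite
   sums, so the weak sets of Y and of the X^n coincide. *)

(* Pointwise real scaling, so that the real Hahn-Banach theorem applies to spaces of complex-valued functions. *)
instantiation "fun" :: (type, real_vector) real_vector
begin

definition scaleR_fun :: "real \<Rightarrow> ('a \<Rightarrow> 'b) \<Rightarrow> 'a \<Rightarrow> 'b" where
  "scaleR_fun c f = (\<lambda>x. c *\<^sub>R f x)"

instance
  by standard (simp_all add: scaleR_fun_def fun_eq_iff scaleR_add_right scaleR_add_left)

end

lemma scaleR_fun_apply [simp]: "(c *\<^sub>R f) x = c *\<^sub>R f x"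
  by (simp add: scaleR_fun_def)

definition sublinear_on :: "'a::real_vector set \<Rightarrow> ('a \<Rightarrow> real) \<Rightarrow> bool" where
  "sublinear_on V p \<longleftrightarrow> (\<forall>x\<in>V. \<forall>y\<in>V. p (x + y) \<le> p x + p y) \<and>
     (\<forall>c. \<forall>x\<in>V. 0 \<le> c \<longrightarrow> p (c *\<^sub>R x) = c * p x)"

(* Partial real-linear functionals are represented by their graphs, so that a chain of extensions is bounded by its union. *)
definition dominated_graph :: "'a::real_vector set \<Rightarrow> ('a \<Rightarrow> real) \<Rightarrow> ('a \<times> real) set \<Rightarrow> bool" where
  "dominated_graph V p G \<longleftrightarrow>
     subspace G \<and> single_valued G \<and> Domain G \<subseteq> V \<and> (\<forall>(x, u) \<in> G. u \<le> p x)"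

lemma dominated_graphD:
  assumes "dominated_graph V p G" "(x, u) \<in> G"
  shows "x \<in> V" "u \<le> p x"
  using assms unfolding dominated_graph_def by auto

lemma single_valued_subspace_iff:
  assumes "subspace (G :: ('a::real_vector \<times> real) set)"
  shows "single_valued G \<longleftrightarrow> (\<forall>u. (0, u) \<in> G \<longrightarrow> u = 0)"
proof
  assume "single_valued G"
  then show "\<forall>u. (0, u) \<in> G \<longrightarrow> u = 0"
    using subspace_0[OF assms] by (auto simp: single_valued_def zero_prod_def)
next
  assume zero: "\<forall>u. (0, u) \<in> G \<longrightarrow> u = 0"
  show "single_valued G"
  proof (rule single_valuedI)
    fix x u v assume "(x, u) \<in> G" "(x, v) \<in> G"
    then have "(x, u) - (x, v) \<in> G" by (rule subspace_diff[OF assms])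
    then show "u = v" using zero by fastforce
  qed
qed

lemma subset_chain_Union_pair:
  assumes "subset.chain A C" "x \<in> \<Union>C" "y \<in> \<Union>C"
  obtains G where "G \<in> C" "x \<in> G" "y \<in> G"
  using assms unfolding subset.chain_def by blast

lemma dominated_graph_Union_chain:
  assumes "C \<noteq> {}" and chain: "subset.chain {G. dominated_graph V p G} C"
  shows "dominated_graph V p (\<Union>C)"
proof -
  have C: "dominated_graph V p G" if "G \<in> C" for G
    using chain that unfolding subset.chain_def by blast
  have sub: "subspace G" if "G \<in> C" for G
    using C[OF that] unfolding dominated_graph_def by blast
  have "subspace (\<Union>C)"
    unfolding subspace_def
  proof (intro conjI ballI allI)
    obtain G where "G \<in> C" using \<open>C \<noteq> {}\<close> by blast
    then show "0 \<in> \<Union>C" using subspace_0[OF sub] by blast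
  next
    fix x y assume "x \<in> \<Union>C" "y \<in> \<Union>C"
    then obtain G where "G \<in> C" "x \<in> G" "y \<in> G" by (rule subset_chain_Union_pair[OF chain])
    then show "x + y \<in> \<Union>C" using subspace_add[OF sub] by blast
  next
    fix c x assume "x \<in> \<Union>C"
    then obtain G where "G \<in> C" "x \<in> G" by blast
    then show "c *\<^sub>R x \<in> \<Union>C" using subspace_scale[OF sub] by blast
  qed
  moreover have "single_valued (\<Union>C)"
  proof (rule single_valuedI)
    fix x u v assume "(x, u) \<in> \<Union>C" "(x, v) \<in> \<Union>C"
    then obtain G where "G \<in> C" "(x, u) \<in> G" "(x, v) \<in> G" by (rule subset_chain_Union_pair[OF chain])
    then show "u = v" using C unfolding dominated_graph_def single_valued_def by blast
  qed
  ultimately show ?thesis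
    using C unfolding dominated_graph_def by blast
qed

lemma dominated_graph_extension_value:
  assumes p: "sublinear_on V p" and V: "subspace V" and G: "dominated_graph V p G" and x0: "x0 \<in> V"
  obtains a where "\<And>y u. (y, u) \<in> G \<Longrightarrow> u - p (y - x0) \<le> a"
    and "\<And>y u. (y, u) \<in> G \<Longrightarrow> a \<le> p (y + x0) - u"
proof -
  have subG: "subspace G" using G by (simp add: dominated_graph_def)
  have zero: "(0, 0) \<in> G" using subspace_0[OF subG] by (simp add: zero_prod_def)
  have gap: "u - p (y - x0) \<le> p (z + x0) - v" if yu: "(y, u) \<in> G" and zv: "(z, v) \<in> G" for y u z v
  proof -
    have "(y + z, u + v) \<in> G" using subspace_add[OF subG yu zv] by simp
    then have "u + v \<le> p ((y - x0) + (z + x0))" using dominated_graphD(2)[OF G] by simp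
    also have "\<dots> \<le> p (y - x0) + p (z + x0)"
      using p x0 V dominated_graphD(1)[OF G yu] dominated_graphD(1)[OF G zv]
      unfolding sublinear_on_def by (meson subspace_add subspace_diff)
    finally show ?thesis by simp
  qed
  define a where "a = Sup {u - p (y - x0) | y u. (y, u) \<in> G}"
  have "u - p (y - x0) \<le> a" if "(y, u) \<in> G" for y u
    unfolding a_def using that gap[OF _ zero] by (intro cSup_upper) (auto intro!: bdd_aboveI)
  moreover have "a \<le> p (z + x0) - v" if "(z, v) \<in> G" for z v
    unfolding a_def using that zero gap by (intro cSup_least) auto
  ultimately show ?thesis using that by blast
qed

lemma dominated_graph_extension_le:
  assumes p: "sublinear_on V p" and V: "subspace V" and G: "dominated_graph V p G"
    and x0: "x0 \<in> V" and yu: "(y, u) \<in> G"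
    and lower: "\<And>y u. (y, u) \<in> G \<Longrightarrow> u - p (y - x0) \<le> a"
    and upper: "\<And>y u. (y, u) \<in> G \<Longrightarrow> a \<le> p (y + x0) - u"
  shows "u + t * a \<le> p (y + t *\<^sub>R x0)"
proof -
  have scaled: "(c *\<^sub>R y, c * u) \<in> G" for c
    using subspace_scale[where c=c and x="(y, u)"] G yu by (simp add: dominated_graph_def)
  have yV: "y \<in> V" using dominated_graphD(1)[OF G yu] .
  have p_scale: "p (c *\<^sub>R x) = c * p x" if "x \<in> V" "0 \<le> c" for c x
    using p that by (simp add: sublinear_on_def)
  consider "t = 0" | "t > 0" | "t < 0" by linarith
  then show ?thesis
  proof cases
    case 1
    then show ?thesis using dominated_graphD(2)[OF G yu] by simp
  next
    case 2
    have "t * a \<le> t * (p (inverse t *\<^sub>R y + x0) - inverse t * u)"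
      using upper[OF scaled[of "inverse t"]] 2 by (simp add: mult_left_mono)
    also have "\<dots> = p (t *\<^sub>R (inverse t *\<^sub>R y + x0)) - u"
      using 2 yV x0 V by (simp add: p_scale subspace_add subspace_scale right_diff_distrib)
    also have "t *\<^sub>R (inverse t *\<^sub>R y + x0) = y + t *\<^sub>R x0"
      using 2 by (simp add: scaleR_add_right)
    finally show ?thesis by simp
  next
    case 3
    define r where "r = - t"
    have r: "r > 0" using 3 by (simp add: r_def)
    have "r * (inverse r * u - p (inverse r *\<^sub>R y - x0)) \<le> r * a"
      using lower[OF scaled[of "inverse r"]] r by (simp add: mult_left_mono)
    moreover have "r * (inverse r * u - p (inverse r *\<^sub>R y - x0))
        = u - p (r *\<^sub>R (inverse r *\<^sub>R y - x0))"
      using r yV x0 V by (simp add: p_scale subspace_diff subspace_scale right_diff_distrib)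
    moreover have "r *\<^sub>R (inverse r *\<^sub>R y - x0) = y + t *\<^sub>R x0"
      using r by (simp add: scaleR_diff_right r_def)
    ultimately show ?thesis by (simp add: r_def)
  qed
qed

lemma dominated_graph_extend:
  assumes p: "sublinear_on V p" and V: "subspace V" and G: "dominated_graph V p G"
    and x0: "x0 \<in> V" "x0 \<notin> Domain G"
  obtains G' where "dominated_graph V p G'" "G \<subseteq> G'" "x0 \<in> Domain G'"
proof -
  have subG: "subspace G" using G by (simp add: dominated_graph_def)
  have zero: "(0, 0) \<in> G" using subspace_0[OF subG] by (simp add: zero_prod_def)
  obtain a where lower: "\<And>y u. (y, u) \<in> G \<Longrightarrow> u - p (y - x0) \<le> a"
    and upper: "\<And>y u. (y, u) \<in> G \<Longrightarrow> a \<le> p (y + x0) - u"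
    using dominated_graph_extension_value[OF p V G x0(1)] by blast
  define G' where "G' = {g + h | g h. g \<in> G \<and> h \<in> span {(x0, a)}}"
  have G'_iff: "w \<in> G' \<longleftrightarrow> (\<exists>y u t. (y, u) \<in> G \<and> w = (y + t *\<^sub>R x0, u + t * a))" for w
  proof -
    have "w \<in> G' \<longleftrightarrow> (\<exists>g\<in>G. \<exists>t. w = g + t *\<^sub>R (x0, a))"
      unfolding G'_def span_singleton by blast
    also have "\<dots> \<longleftrightarrow> (\<exists>y u t. (y, u) \<in> G \<and> w = (y + t *\<^sub>R x0, u + t * a))"
      by (simp add: Bex_def split_paired_Ex)
    finally show ?thesis .
  qed
  have subG': "subspace G'"
    unfolding G'_def by (intro subspace_sums subG subspace_span)
  have "single_valued G'"
    unfolding single_valued_subspace_iff[OF subG']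
  proof (intro allI impI)
    fix w assume "(0, w) \<in> G'"
    then obtain y u t where yu: "(y, u) \<in> G" and w: "0 = y + t *\<^sub>R x0" "w = u + t * a"
      unfolding G'_iff by blast
    have "t = 0"
    proof (rule ccontr)
      assume "t \<noteq> 0"
      moreover have "y = - (t *\<^sub>R x0)" using w(1)[symmetric] by (simp add: eq_neg_iff_add_eq_0)
      ultimately have "x0 = (- inverse t) *\<^sub>R y" by simp
      then show False using x0(2) subspace_scale[OF subG yu, of "- inverse t"] by auto
    qed
    then show "w = 0" using w yu G unfolding dominated_graph_def single_valued_subspace_iff[OF subG] by simp
  qed
  moreover have "Domain G' \<subseteq> V"
    using G'_iff dominated_graphD(1)[OF G] x0(1) V by (force intro: subspace_add subspace_scale)
  moreover have "\<forall>(x, w) \<in> G'. w \<le> p x"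
    using G'_iff dominated_graph_extension_le[OF p V G x0(1) _ lower upper] by auto
  moreover have "G \<subseteq> G'"
    using G'_iff by force
  moreover have "x0 \<in> Domain G'"
    using G'_iff[of "(x0, a)"] zero by force
  ultimately show ?thesis
    using that subG' unfolding dominated_graph_def by blast
qed

lemma dominated_graph_of_functional:
  assumes M: "subspace M" "M \<subseteq> V"
    and f_add: "\<And>x y. x \<in> M \<Longrightarrow> y \<in> M \<Longrightarrow> f (x + y) = f x + f y"
    and f_scale: "\<And>c x. x \<in> M \<Longrightarrow> f (c *\<^sub>R x) = c * f x"
    and f_le: "\<And>x. x \<in> M \<Longrightarrow> f x \<le> p x"
  shows "dominated_graph V p ((\<lambda>x. (x, f x)) ` M)"
proof -
  define G where "G = (\<lambda>x. (x, f x)) ` M"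
  have G_iff: "w \<in> G \<longleftrightarrow> (\<exists>x\<in>M. w = (x, f x))" for w
    unfolding G_def by blast
  have "subspace G"
    unfolding subspace_def
  proof (intro conjI ballI allI)
    have "f 0 = 0" using f_scale[of 0 0] subspace_0[OF M(1)] by simp
    then show "0 \<in> G" using G_iff subspace_0[OF M(1)] by (auto simp: zero_prod_def)
  next
    fix a b assume "a \<in> G" "b \<in> G"
    then obtain x y where "x \<in> M" "y \<in> M" "a = (x, f x)" "b = (y, f y)" using G_iff by blast
    then show "a + b \<in> G" using G_iff f_add subspace_add[OF M(1)] by auto
  next
    fix c a assume "a \<in> G"
    then obtain x where "x \<in> M" "a = (x, f x)" using G_iff by blast
    then show "c *\<^sub>R a \<in> G" using G_iff f_scale subspace_scale[OF M(1)] by auto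
  qed
  moreover have "single_valued G" "Domain G \<subseteq> V" "\<forall>(x, u) \<in> G. u \<le> p x"
    using M(2) f_le G_iff by (auto simp: single_valued_def)
  ultimately show ?thesis unfolding dominated_graph_def G_def by blast
qed

lemma dominated_graph_total_extension:
  assumes p: "sublinear_on V p" and V: "subspace V" and G0: "dominated_graph V p G0"
  obtains G where "dominated_graph V p G" and "G0 \<subseteq> G" and "Domain G = V"
proof -
  define A where "A = {G. dominated_graph V p G \<and> G0 \<subseteq> G}"
  have "\<exists>U\<in>A. \<forall>G\<in>C. G \<subseteq> U" if "C \<in> chains A" for C
  proof (cases "C = {}")
    case True
    then show ?thesis using G0 unfolding A_def by blast
  next
    case False
    have "subset.chain {G. dominated_graph V p G} C"
      using that unfolding chains_alt_def A_def subset.chain_def by blast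
    then have "dominated_graph V p (\<Union>C)" by (rule dominated_graph_Union_chain[OF False])
    moreover have "G0 \<subseteq> \<Union>C" using False that unfolding chains_alt_def A_def subset.chain_def by blast
    ultimately show ?thesis unfolding A_def by blast
  qed
  then have "\<exists>G\<in>A. \<forall>G'\<in>A. G \<subseteq> G' \<longrightarrow> G' = G"
    by (intro Zorn_Lemma2) blast
  then obtain G where "G \<in> A" and maximal: "\<And>G'. G' \<in> A \<Longrightarrow> G \<subseteq> G' \<Longrightarrow> G' = G"
    by blast
  then have G: "dominated_graph V p G" and "G0 \<subseteq> G" unfolding A_def by auto
  moreover have "Domain G = V"
  proof (rule ccontr)
    assume "Domain G \<noteq> V"
    then obtain x0 where "x0 \<in> V" "x0 \<notin> Domain G"
      using G unfolding dominated_graph_def by blast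
    then obtain G' where "dominated_graph V p G'" "G \<subseteq> G'" "x0 \<in> Domain G'"
      using dominated_graph_extend[OF p V G] by blast
    then show False
      using maximal[of G'] \<open>G0 \<subseteq> G\<close> \<open>x0 \<notin> Domain G\<close> unfolding A_def by blast
  qed
  ultimately show ?thesis using that by blast
qed

theorem real_hahn_banach:
  fixes p f :: "'a::real_vector \<Rightarrow> real"
  assumes V: "subspace V" and p: "sublinear_on V p" and M: "subspace M" "M \<subseteq> V"
    and f_add: "\<And>x y. x \<in> M \<Longrightarrow> y \<in> M \<Longrightarrow> f (x + y) = f x + f y"
    and f_scale: "\<And>c x. x \<in> M \<Longrightarrow> f (c *\<^sub>R x) = c * f x"
    and f_le: "\<And>x. x \<in> M \<Longrightarrow> f x \<le> p x"
  obtains g where "\<And>x y. x \<in> V \<Longrightarrow> y \<in> V \<Longrightarrow> g (x + y) = g x + g y"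
    and "\<And>c x. x \<in> V \<Longrightarrow> g (c *\<^sub>R x) = c * g x"
    and "\<And>x. x \<in> M \<Longrightarrow> g x = f x" and "\<And>x. x \<in> V \<Longrightarrow> g x \<le> p x"
proof -
  obtain G where G: "dominated_graph V p G" and f_G: "(\<lambda>x. (x, f x)) ` M \<subseteq> G" and dom: "Domain G = V"
    using dominated_graph_total_extension[OF p V dominated_graph_of_functional[OF M f_add f_scale f_le]]
    by blast
  have subG: "subspace G" and svG: "single_valued G" using G unfolding dominated_graph_def by auto
  define g where "g x = (THE u. (x, u) \<in> G)" for x
  have g_eq: "g x = u" if "(x, u) \<in> G" for x u
    unfolding g_def using that svG by (auto simp: single_valued_def)
  have g_graph: "(x, g x) \<in> G" if "x \<in> V" for x
    using that dom g_eq by blast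
  show ?thesis
  proof
    show "g (x + y) = g x + g y" if "x \<in> V" "y \<in> V" for x y
      using g_eq subspace_add[OF subG g_graph[OF that(1)] g_graph[OF that(2)]] by simp
    show "g (c *\<^sub>R x) = c * g x" if "x \<in> V" for c x
      using g_eq subspace_scale[OF subG g_graph[OF that], of c] by simp
    show "g x = f x" if "x \<in> M" for x
      using g_eq f_G that by blast
    show "g x \<le> p x" if "x \<in> V" for x
      using dominated_graphD(2)[OF G g_graph[OF that]] .
  qed
qed

definition csubspace :: "('a \<Rightarrow> complex) set \<Rightarrow> bool" where
  "csubspace X \<longleftrightarrow> 0 \<in> X \<and> (\<forall>x\<in>X. \<forall>y\<in>X. x + y \<in> X) \<and> (\<forall>c. \<forall>x\<in>X. (\<lambda>j. c * x j) \<in> X)"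

definition cseminorm_on :: "('a \<Rightarrow> complex) set \<Rightarrow> (('a \<Rightarrow> complex) \<Rightarrow> real) \<Rightarrow> bool" where
  "cseminorm_on X q \<longleftrightarrow>
     (\<forall>x\<in>X. \<forall>y\<in>X. q (x + y) \<le> q x + q y) \<and> (\<forall>c. \<forall>x\<in>X. q (\<lambda>j. c * x j) = cmod c * q x)"

definition clinear_on :: "('a \<Rightarrow> complex) set \<Rightarrow> (('a \<Rightarrow> complex) \<Rightarrow> complex) \<Rightarrow> bool" where
  "clinear_on X f \<longleftrightarrow>
     (\<forall>x\<in>X. \<forall>y\<in>X. f (x + y) = f x + f y) \<and> (\<forall>c. \<forall>x\<in>X. f (\<lambda>j. c * x j) = c * f x)"

lemma scaleR_cfun: "c *\<^sub>R x = (\<lambda>j. complex_of_real c * x j)"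
  by (simp add: fun_eq_iff scaleR_conv_of_real)

lemma uminus_cfun: "- x = (\<lambda>j. (- 1) * (x :: 'a \<Rightarrow> complex) j)"
  by (rule ext) simp

context
  fixes X :: "('a \<Rightarrow> complex) set"
  assumes X: "csubspace X"
begin

lemma csubspace_0: "0 \<in> X"
  using X by (simp add: csubspace_def)

lemma csubspace_add: "x \<in> X \<Longrightarrow> y \<in> X \<Longrightarrow> x + y \<in> X"
  using X by (simp add: csubspace_def)

lemma csubspace_cmult: "x \<in> X \<Longrightarrow> (\<lambda>j. c * x j) \<in> X"
  using X by (simp add: csubspace_def)

lemma csubspace_diff: "x \<in> X \<Longrightarrow> y \<in> X \<Longrightarrow> x - y \<in> X"
  unfolding diff_conv_add_uminus uminus_cfun by (intro csubspace_add csubspace_cmult)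

lemma csubspace_imp_subspace: "subspace X"
  unfolding subspace_def scaleR_cfun by (simp add: csubspace_0 csubspace_add csubspace_cmult)

end

context
  fixes X :: "('a \<Rightarrow> complex) set" and q :: "('a \<Rightarrow> complex) \<Rightarrow> real"
  assumes X: "csubspace X" and q: "cseminorm_on X q"
begin

lemma cseminorm_on_triangle: "x \<in> X \<Longrightarrow> y \<in> X \<Longrightarrow> q (x + y) \<le> q x + q y"
  using q by (simp add: cseminorm_on_def)

lemma cseminorm_on_cmult: "x \<in> X \<Longrightarrow> q (\<lambda>j. c * x j) = cmod c * q x"
  using q by (simp add: cseminorm_on_def)

lemma cseminorm_on_0: "q 0 = 0"
proof -
  have "(\<lambda>j. 0 * (0 :: 'a \<Rightarrow> complex) j) = 0" by (rule ext) simp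
  then show ?thesis using cseminorm_on_cmult[OF csubspace_0[OF X], of 0] by simp
qed

lemma cseminorm_on_minus: "x \<in> X \<Longrightarrow> q (- x) = q x"
  using cseminorm_on_cmult[of x "- 1"] by (simp add: uminus_cfun)

lemma cseminorm_on_nonneg:
  assumes "x \<in> X" shows "0 \<le> q x"
proof -
  have "q (x + - x) \<le> q x + q (- x)"
    using cseminorm_on_triangle[OF assms csubspace_diff[OF X csubspace_0[OF X] assms]] by simp
  then show ?thesis using cseminorm_on_0 cseminorm_on_minus[OF assms] by simp
qed

lemma cseminorm_on_diff_triangle:
  "x \<in> X \<Longrightarrow> y \<in> X \<Longrightarrow> z \<in> X \<Longrightarrow> q (x - z) \<le> q (x - y) + q (y - z)"
  using cseminorm_on_triangle[of "x - y" "y - z"] csubspace_diff[OF X] by simp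

lemma cseminorm_on_imp_sublinear_on: "sublinear_on X q"
  unfolding sublinear_on_def scaleR_cfun using cseminorm_on_triangle cseminorm_on_cmult by simp

end

lemma cnj_sgn_mult_self: "cnj (sgn w) * w = complex_of_real (cmod w)"
proof (cases "w = 0")
  case False
  have "cnj (sgn w) * w = (cnj w * w) / complex_of_real (cmod w)"
    by (simp add: sgn_div_norm scaleR_conv_of_real divide_inverse ac_simps)
  also have "cnj w * w = complex_of_real (cmod w) * complex_of_real (cmod w)"
    by (simp add: complex_norm_square[symmetric] power2_eq_square mult.commute)
  finally show ?thesis using False by simp
qed simp

lemma clinear_on_complexification:
  fixes h :: "('a \<Rightarrow> complex) \<Rightarrow> real"
  assumes V: "csubspace V"
    and h_add: "\<And>x y. x \<in> V \<Longrightarrow> y \<in> V \<Longrightarrow> h (x + y) = h x + h y"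
    and h_scale: "\<And>c x. x \<in> V \<Longrightarrow> h (c *\<^sub>R x) = c * h x"
  shows "clinear_on V (\<lambda>z. Complex (h z) (- h (\<lambda>j. \<i> * z j)))"
proof -
  define J where "J z = (\<lambda>j. \<i> * z j)" for z :: "'a \<Rightarrow> complex"
  have JV: "J z \<in> V" if "z \<in> V" for z
    unfolding J_def using csubspace_cmult[OF V that] .
  define g where "g z = Complex (h z) (- h (J z))" for z
  have g_add: "g (x + y) = g x + g y" if "x \<in> V" "y \<in> V" for x y
  proof -
    have "J (x + y) = J x + J y" by (simp add: J_def fun_eq_iff distrib_left)
    then show ?thesis using that JV by (simp add: g_def h_add complex_eq_iff)
  qed
  have g_scaleR: "g (r *\<^sub>R z) = complex_of_real r * g z" if "z \<in> V" for r z
  proof -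
    have "J (r *\<^sub>R z) = r *\<^sub>R J z" by (simp add: J_def fun_eq_iff scaleR_conv_of_real)
    then show ?thesis using that JV by (simp add: g_def h_scale complex_eq_iff)
  qed
  have g_J: "g (J z) = \<i> * g z" if "z \<in> V" for z
  proof -
    have "J (J z) = (- 1) *\<^sub>R z" by (simp add: J_def fun_eq_iff)
    then have "h (J (J z)) = - h z" using h_scale[OF that, of "- 1"] by simp
    then show ?thesis by (simp add: g_def complex_eq_iff)
  qed
  have "g (\<lambda>j. c * z j) = c * g z" if "z \<in> V" for c z
  proof -
    have "(\<lambda>j. c * z j) = Re c *\<^sub>R z + Im c *\<^sub>R J z"
      by (simp add: J_def fun_eq_iff scaleR_conv_of_real complex_eq_iff)
    then have "g (\<lambda>j. c * z j) = Re c * g z + Im c * (\<i> * g z)"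
      using that JV csubspace_imp_subspace[OF V] by (simp add: g_add g_scaleR g_J subspace_scale)
    also have "\<dots> = c * g z" by (simp add: complex_eq_iff)
    finally show ?thesis .
  qed
  then show ?thesis
    using g_add unfolding clinear_on_def g_def J_def by blast
qed

theorem complex_hahn_banach:
  fixes V M :: "('a \<Rightarrow> complex) set" and p :: "('a \<Rightarrow> complex) \<Rightarrow> real"
  assumes V: "csubspace V" and p: "cseminorm_on V p" and M: "csubspace M" "M \<subseteq> V"
    and f: "clinear_on M f" and f_le: "\<And>x. x \<in> M \<Longrightarrow> cmod (f x) \<le> p x"
  obtains g where "clinear_on V g" and "\<And>x. x \<in> M \<Longrightarrow> g x = f x"
    and "\<And>x. x \<in> V \<Longrightarrow> cmod (g x) \<le> p x"
proof -
  have f_add: "f (x + y) = f x + f y" if "x \<in> M" "y \<in> M" for x y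
    using f that by (simp add: clinear_on_def)
  have f_cmult: "f (\<lambda>j. c * x j) = c * f x" if "x \<in> M" for c x
    using f that by (simp add: clinear_on_def)
  have Re_f_add: "Re (f (x + y)) = Re (f x) + Re (f y)" if "x \<in> M" "y \<in> M" for x y
    using f_add[OF that] by simp
  have Re_f_scale: "Re (f (c *\<^sub>R x)) = c * Re (f x)" if "x \<in> M" for c x
    using f_cmult[OF that] by (simp add: scaleR_cfun)
  have Re_f_le: "Re (f x) \<le> p x" if "x \<in> M" for x
    using complex_Re_le_cmod f_le[OF that] by (rule order_trans)
  obtain h where h_add: "\<And>x y. x \<in> V \<Longrightarrow> y \<in> V \<Longrightarrow> h (x + y) = h x + h y"
    and h_scale: "\<And>c x. x \<in> V \<Longrightarrow> h (c *\<^sub>R x) = c * h x"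
    and h_M: "\<And>x. x \<in> M \<Longrightarrow> h x = Re (f x)" and h_le: "\<And>x. x \<in> V \<Longrightarrow> h x \<le> p x"
    using real_hahn_banach[where f="\<lambda>x. Re (f x)", OF csubspace_imp_subspace[OF V]
        cseminorm_on_imp_sublinear_on[OF V p] csubspace_imp_subspace[OF M(1)] M(2) Re_f_add Re_f_scale Re_f_le]
    by metis
  define g where "g z = Complex (h z) (- h (\<lambda>j. \<i> * z j))" for z
  have g: "clinear_on V g"
    unfolding g_def by (rule clinear_on_complexification[OF V h_add h_scale])
  moreover have "g z = f z" if "z \<in> M" for z
  proof -
    have "(\<lambda>j. \<i> * z j) \<in> M" using csubspace_cmult[OF M(1) that] .
    then have "h (\<lambda>j. \<i> * z j) = - Im (f z)" using h_M f_cmult[OF that] by simp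
    then show ?thesis using h_M[OF that] by (simp add: g_def complex_eq_iff)
  qed
  \<comment> \<open>Rotating z by the phase of g z makes g real there, so the real bound h \<le> p applies.\<close>
  moreover have "cmod (g z) \<le> p z" if "z \<in> V" for z
  proof -
    define c where "c = cnj (sgn (g z))"
    have "complex_of_real (cmod (g z)) = g (\<lambda>j. c * z j)"
      using g that cnj_sgn_mult_self unfolding clinear_on_def by (simp add: c_def)
    then have "cmod (g z) = h (\<lambda>j. c * z j)" by (simp add: g_def complex_eq_iff)
    also have "\<dots> \<le> cmod c * p z"
      using h_le csubspace_cmult[OF V that] cseminorm_on_cmult[OF V p that] by metis
    also have "\<dots> \<le> p z"
      using cseminorm_on_nonneg[OF V p that] by (simp add: c_def norm_sgn mult_le_cancel_right1)
    finally show ?thesis .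
  qed
  ultimately show ?thesis using that by blast
qed

lemma openin_FKtop:
  "openin (FKtop X s) U \<longleftrightarrow>
     U \<subseteq> X \<and> (\<forall>x\<in>U. \<exists>F e. finite F \<and> e > 0 \<and> {y\<in>X. \<forall>i\<in>F. s i (y - x) < e} \<subseteq> U)"
proof -
  define N where "N x F e = {y\<in>X. \<forall>i\<in>F. s i (y - x) < e}" for x F e
  define P where "P = (\<lambda>U. U \<subseteq> X \<and> (\<forall>x\<in>U. \<exists>F e. finite F \<and> e > 0 \<and> N x F e \<subseteq> U))"
  have "istopology P"
    unfolding istopology_def
  proof (intro conjI allI impI)
    fix S T assume "P S" "P T"
    show "P (S \<inter> T)"
      unfolding P_def
    proof (intro conjI ballI)
      show "S \<inter> T \<subseteq> X" using \<open>P S\<close> unfolding P_def by blast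
      fix x assume "x \<in> S \<inter> T"
      obtain F1 e1 where "finite F1" "e1 > 0" "N x F1 e1 \<subseteq> S"
        using \<open>P S\<close> \<open>x \<in> S \<inter> T\<close> unfolding P_def by blast
      moreover obtain F2 e2 where "finite F2" "e2 > 0" "N x F2 e2 \<subseteq> T"
        using \<open>P T\<close> \<open>x \<in> S \<inter> T\<close> unfolding P_def by blast
      moreover have "N x (F1 \<union> F2) (min e1 e2) \<subseteq> N x F1 e1 \<inter> N x F2 e2"
        unfolding N_def by auto
      ultimately show "\<exists>F e. finite F \<and> e > 0 \<and> N x F e \<subseteq> S \<inter> T"
        by (intro exI[of _ "F1 \<union> F2"] exI[of _ "min e1 e2"]) auto
    qed
  next
    fix K assume K: "\<forall>U\<in>K. P U"
    show "P (\<Union>K)"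
      unfolding P_def
    proof (intro conjI ballI)
      show "\<Union>K \<subseteq> X" using K unfolding P_def by blast
      fix x assume "x \<in> \<Union>K"
      then obtain U where "U \<in> K" "x \<in> U" by blast
      then obtain F e where "finite F" "e > 0" "N x F e \<subseteq> U"
        using K unfolding P_def by blast
      then show "\<exists>F e. finite F \<and> e > 0 \<and> N x F e \<subseteq> \<Union>K"
        using \<open>U \<in> K\<close> by blast
    qed
  qed
  then have "openin (FKtop X s) = P"
    unfolding FKtop_def P_def N_def by (rule topology_inverse')
  then show ?thesis unfolding P_def N_def by simp
qed

lemma topspace_FKtop: "topspace (FKtop X s) = X"
proof
  show "topspace (FKtop X s) \<subseteq> X"
    using openin_topspace[of "FKtop X s"] unfolding openin_FKtop by (rule conjunct1)
  have "openin (FKtop X s) X"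
    unfolding openin_FKtop by (intro conjI subset_refl ballI exI[of _ "{}"] exI[of _ "1::real"]) auto
  then show "X \<subseteq> topspace (FKtop X s)" by (rule openin_subset)
qed

definition seminorm_bounded ::
    "('a \<Rightarrow> complex) set \<Rightarrow> ('i \<Rightarrow> ('a \<Rightarrow> complex) \<Rightarrow> real) \<Rightarrow> (('a \<Rightarrow> complex) \<Rightarrow> complex) \<Rightarrow> bool" where
  "seminorm_bounded X s f \<longleftrightarrow>
     (\<exists>F C. finite F \<and> 0 \<le> C \<and> (\<forall>y\<in>X. cmod (f y) \<le> C * (\<Sum>i\<in>F. s i y)))"

context
  fixes X :: "seqc set" and s :: "'i \<Rightarrow> seqc \<Rightarrow> real"
  assumes X: "csubspace X" and s: "\<And>i. cseminorm_on X (s i)"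
begin

lemma openin_FKtop_seminorm_ball:
  assumes x: "x \<in> X"
  shows "openin (FKtop X s) {y\<in>X. s i (y - x) < e}"
  unfolding openin_FKtop
proof (intro conjI ballI)
  fix z assume z: "z \<in> {y\<in>X. s i (y - x) < e}"
  have "{y\<in>X. \<forall>i'\<in>{i}. s i' (y - z) < e - s i (z - x)} \<subseteq> {y\<in>X. s i (y - x) < e}"
    using cseminorm_on_diff_triangle[OF X s _ _ x, of _ z i] z by fastforce
  then show "\<exists>F e'. finite F \<and> e' > 0 \<and> {y\<in>X. \<forall>i\<in>F. s i (y - z) < e'} \<subseteq> {y\<in>X. s i (y - x) < e}"
    using z by (intro exI[of _ "{i}"] exI[of _ "e - s i (z - x)"]) auto
qed blast

lemma limitin_FKtop_iff:
  assumes u: "\<And>n. u n \<in> X"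
  shows "limitin (FKtop X s) u x sequentially \<longleftrightarrow> x \<in> X \<and> (\<forall>i. (\<lambda>n. s i (u n - x)) \<longlonglongrightarrow> 0)"
proof (cases "x \<in> X")
  case True
  have abs: "\<bar>s i (u n - x)\<bar> = s i (u n - x)" for i n
    using cseminorm_on_nonneg[OF X s csubspace_diff[OF X u True]] by simp
  have "limitin (FKtop X s) u x sequentially \<longleftrightarrow>
      (\<forall>i e. 0 < e \<longrightarrow> eventually (\<lambda>n. s i (u n - x) < e) sequentially)"
  proof
    assume lim: "limitin (FKtop X s) u x sequentially"
    show "\<forall>i e. 0 < e \<longrightarrow> eventually (\<lambda>n. s i (u n - x) < e) sequentially"
    proof (intro allI impI)
      fix i and e :: real assume "0 < e"
      then have "x \<in> {y\<in>X. s i (y - x) < e}" using True cseminorm_on_0[OF X s] by simp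
      then have "eventually (\<lambda>n. u n \<in> {y\<in>X. s i (y - x) < e}) sequentially"
        using lim openin_FKtop_seminorm_ball[OF True] unfolding limitin_def by blast
      then show "eventually (\<lambda>n. s i (u n - x) < e) sequentially" by (rule eventually_mono) simp
    qed
  next
    assume small: "\<forall>i e. 0 < e \<longrightarrow> eventually (\<lambda>n. s i (u n - x) < e) sequentially"
    show "limitin (FKtop X s) u x sequentially"
      unfolding limitin_def topspace_FKtop
    proof (intro conjI allI impI True)
      fix U assume "openin (FKtop X s) U \<and> x \<in> U"
      then obtain F e where "finite F" "e > 0" and FU: "{y\<in>X. \<forall>i\<in>F. s i (y - x) < e} \<subseteq> U"
        unfolding openin_FKtop by blast
      then have "eventually (\<lambda>n. \<forall>i\<in>F. s i (u n - x) < e) sequentially"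
        using small by (simp add: eventually_ball_finite)
      then show "eventually (\<lambda>n. u n \<in> U) sequentially"
        by (rule eventually_mono) (use u FU in blast)
    qed
  qed
  then show ?thesis using True by (simp add: tendsto_iff dist_real_def abs)
next
  case False
  then show ?thesis by (simp add: limitin_def topspace_FKtop)
qed

lemma continuous_map_FKtop_if_seminorm_bounded:
  assumes f_add: "\<And>x y. x \<in> X \<Longrightarrow> y \<in> X \<Longrightarrow> f (x + y) = f x + f y"
    and bounded: "seminorm_bounded X s f"
  shows "continuous_map (FKtop X s) euclidean f"
proof -
  obtain F C where F: "finite F" and C: "0 \<le> C"
    and bound: "\<And>y. y \<in> X \<Longrightarrow> cmod (f y) \<le> C * (\<Sum>i\<in>F. s i y)"
    using bounded unfolding seminorm_bounded_def by blast
  have near: "cmod (f y - f x) \<le> C * card F * e"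
    if x: "x \<in> X" and y: "y \<in> X" and close: "\<forall>i\<in>F. s i (y - x) < e" for x y e
  proof -
    have yx: "y - x \<in> X" using csubspace_diff[OF X y x] .
    have "f y = f (y - x) + f x" using f_add[OF yx x] by simp
    then have "cmod (f y - f x) = cmod (f (y - x))" by simp
    also have "\<dots> \<le> C * (\<Sum>i\<in>F. s i (y - x))" using bound[OF yx] .
    also have "\<dots> \<le> C * (card F * e)"
      using close sum_bounded_above[of F "\<lambda>i. s i (y - x)" e] C
      by (simp add: less_imp_le mult_left_mono)
    finally show ?thesis by simp
  qed
  show ?thesis
    unfolding continuous_map topspace_FKtop
  proof (intro conjI allI impI)
    fix U :: "complex set" assume "openin euclidean U"
    show "openin (FKtop X s) {x \<in> X. f x \<in> U}"
      unfolding openin_FKtop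
    proof (intro conjI ballI)
      fix x assume x: "x \<in> {x \<in> X. f x \<in> U}"
      then have "open U" "f x \<in> U" using \<open>openin euclidean U\<close> by auto
      then obtain r where r: "r > 0" "ball (f x) r \<subseteq> U" by (rule openE)
      have K: "C * card F + 1 > 0" using C by (simp add: add_nonneg_pos)
      define e where "e = r / (C * card F + 1)"
      have e: "e > 0" using r K by (simp add: e_def)
      have "C * card F * e < r" using r K by (simp add: e_def field_simps)
      then have "{y\<in>X. \<forall>i\<in>F. s i (y - x) < e} \<subseteq> {x \<in> X. f x \<in> U}"
        using near[of x] x r by (force simp: dist_norm norm_minus_commute)
      then show "\<exists>F e. finite F \<and> e > 0 \<and> {y\<in>X. \<forall>i\<in>F. s i (y - x) < e} \<subseteq> {x \<in> X. f x \<in> U}"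
        using F e by blast
    qed blast
  qed simp
qed

lemma cmod_le_seminorm_sum_if_small:
  assumes f_cmult: "\<And>c x. x \<in> X \<Longrightarrow> f (\<lambda>j. c * x j) = c * f x"
    and F: "finite F" and e: "e > 0"
    and small: "\<And>x. x \<in> X \<Longrightarrow> \<forall>i\<in>F. s i x < e \<Longrightarrow> cmod (f x) < 1"
    and y: "y \<in> X"
  shows "cmod (f y) \<le> 1 / e * (\<Sum>i\<in>F. s i y)"
proof (rule field_le_epsilon)
  fix d :: real assume d: "d > 0"
  define S where "S = (\<Sum>i\<in>F. s i y)"
  have S: "S \<ge> 0" unfolding S_def using cseminorm_on_nonneg[OF X s y] by (simp add: sum_nonneg)
  define c where "c = e / (S + d * e)"
  have denom: "S + d * e > 0" using S d e by (simp add: add_nonneg_pos)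
  have c: "c > 0" using denom e by (simp add: c_def)
  have "c * S < c * (S + d * e)" using c d e by simp
  also have "c * (S + d * e) = e" using denom by (simp add: c_def)
  finally have "c * S < e" .
  have "\<forall>i\<in>F. s i (\<lambda>j. complex_of_real c * y j) < e"
  proof
    fix i assume "i \<in> F"
    have "s i y \<le> S"
      unfolding S_def using F \<open>i \<in> F\<close> cseminorm_on_nonneg[OF X s y] by (intro member_le_sum) auto
    then have "s i (\<lambda>j. complex_of_real c * y j) \<le> c * S"
      using cseminorm_on_cmult[OF X s y] c by (simp add: mult_left_mono)
    then show "s i (\<lambda>j. complex_of_real c * y j) < e" using \<open>c * S < e\<close> by linarith
  qed
  then have "cmod (f (\<lambda>j. complex_of_real c * y j)) < 1"
    by (rule small[OF csubspace_cmult[OF X y]])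
  then have "c * cmod (f y) < 1" using f_cmult[OF y] c by (simp add: norm_mult)
  then have "cmod (f y) < 1 / c" using c by (simp add: field_simps)
  also have "1 / c = 1 / e * S + d" using denom e by (simp add: c_def field_simps)
  finally show "cmod (f y) \<le> 1 / e * (\<Sum>i\<in>F. s i y) + d" by (simp add: S_def)
qed

lemma seminorm_bounded_if_continuous_map_FKtop:
  assumes f_cmult: "\<And>c x. x \<in> X \<Longrightarrow> f (\<lambda>j. c * x j) = c * f x"
    and cont: "continuous_map (FKtop X s) euclidean f"
  shows "seminorm_bounded X s f"
proof -
  have "f 0 = 0" using f_cmult[OF csubspace_0[OF X], of 0] by (simp add: zero_fun_def)
  then have "0 \<in> {x \<in> X. f x \<in> ball 0 1}" using csubspace_0[OF X] by simp
  moreover have "openin (FKtop X s) {x \<in> X. f x \<in> ball 0 1}"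
    using openin_continuous_map_preimage[OF cont, of "ball 0 1"] by (simp add: topspace_FKtop)
  ultimately obtain F e where F: "finite F" and e: "e > 0"
    and small: "{y\<in>X. \<forall>i\<in>F. s i (y - 0) < e} \<subseteq> {x \<in> X. f x \<in> ball 0 1}"
    unfolding openin_FKtop by blast
  have "cmod (f y) \<le> 1 / e * (\<Sum>i\<in>F. s i y)" if "y \<in> X" for y
  proof (rule cmod_le_seminorm_sum_if_small[where f=f, OF f_cmult F e _ that])
    show "cmod (f x) < 1" if "x \<in> X" "\<forall>i\<in>F. s i x < e" for x
      using small that by auto
  qed
  then show ?thesis
    unfolding seminorm_bounded_def using F e by (intro exI[of _ F] exI[of _ "1 / e"]) simp
qed

lemma FK_dual_iff_seminorm_bounded:
  "f \<in> FK_dual X s \<longleftrightarrow> clinear_on X f \<and> seminorm_bounded X s f"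
proof
  assume "f \<in> FK_dual X s"
  then show "clinear_on X f \<and> seminorm_bounded X s f"
    unfolding FK_dual_def clinear_on_def by (blast intro: seminorm_bounded_if_continuous_map_FKtop)
next
  assume "clinear_on X f \<and> seminorm_bounded X s f"
  then show "f \<in> FK_dual X s"
    unfolding FK_dual_def clinear_on_def by (blast intro: continuous_map_FKtop_if_seminorm_bounded)
qed

end

lemma csubspace_INT: "(\<And>m. csubspace (X m)) \<Longrightarrow> csubspace (\<Inter>m. X m)"
  unfolding csubspace_def by blast

lemma cseminorm_on_subset: "cseminorm_on X q \<Longrightarrow> Y \<subseteq> X \<Longrightarrow> cseminorm_on Y q"
  unfolding cseminorm_on_def by blast

lemma clinear_on_subset: "clinear_on X f \<Longrightarrow> Y \<subseteq> X \<Longrightarrow> clinear_on Y f"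
  unfolding clinear_on_def by blast

lemma sum_fun_apply: "(\<Sum>m\<in>A. z m) i = (\<Sum>m\<in>A. z m i)"
  by (induction A rule: infinite_finite_induct) auto

lemma csubspace_sum:
  assumes "csubspace V" "\<And>m. m \<in> A \<Longrightarrow> z m \<in> V"
  shows "(\<Sum>m\<in>A. z m) \<in> V"
  using assms(2)
  by (induction A rule: infinite_finite_induct) (auto intro: csubspace_0[OF assms(1)] csubspace_add[OF assms(1)])

lemma clinear_on_0:
  assumes "csubspace V" "clinear_on V f"
  shows "f 0 = 0"
proof -
  have "(\<lambda>j. 0 * (0 :: 'a \<Rightarrow> complex) j) = 0" by (rule ext) simp
  then show ?thesis
    using assms csubspace_0[OF assms(1)] unfolding clinear_on_def by (metis mult_zero_left)
qed

lemma clinear_on_sum: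
  assumes V: "csubspace V" and f: "clinear_on V f" and z: "\<And>m. m \<in> A \<Longrightarrow> z m \<in> V"
  shows "f (\<Sum>m\<in>A. z m) = (\<Sum>m\<in>A. f (z m))"
  using z
proof (induction A rule: infinite_finite_induct)
  case (infinite A)
  then show ?case by (simp only: sum.infinite[OF infinite(1)] clinear_on_0[OF V f])
next
  case empty
  then show ?case by (simp only: sum.empty clinear_on_0[OF V f])
next
  case (insert a A)
  have add: "f (z a + (\<Sum>m\<in>A. z m)) = f (z a) + f (\<Sum>m\<in>A. z m)"
    using f insert.prems csubspace_sum[OF V, of A z] unfolding clinear_on_def by blast
  have IH: "f (\<Sum>m\<in>A. z m) = (\<Sum>m\<in>A. f (z m))"
    using insert.IH insert.prems by blast
  show ?case
    unfolding sum.insert[OF insert.hyps] by (simp only: add IH)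
qed

lemma cseminorm_on_scaled_sum:
  assumes "0 \<le> C" "\<And>k. cseminorm_on X (s k)"
  shows "cseminorm_on X (\<lambda>y. C * (\<Sum>k\<in>K. s k y))"
  unfolding cseminorm_on_def
proof (intro conjI ballI allI)
  fix x y assume "x \<in> X" "y \<in> X"
  then have "(\<Sum>k\<in>K. s k (x + y)) \<le> (\<Sum>k\<in>K. s k x) + (\<Sum>k\<in>K. s k y)"
    using assms(2) unfolding cseminorm_on_def sum.distrib[symmetric] by (intro sum_mono) blast
  then show "C * (\<Sum>k\<in>K. s k (x + y)) \<le> C * (\<Sum>k\<in>K. s k x) + C * (\<Sum>k\<in>K. s k y)"
    using assms(1) by (simp add: distrib_left[symmetric] mult_left_mono)
next
  fix c x assume "x \<in> X"
  then show "C * (\<Sum>k\<in>K. s k (\<lambda>j. c * x j)) = cmod c * (C * (\<Sum>k\<in>K. s k x))"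
    using assms(2) unfolding cseminorm_on_def by (simp add: sum_distrib_left ac_simps)
qed

lemma seminorm_bounded_pair_index:
  assumes "seminorm_bounded X (\<lambda>(n, k). t n k) f" and nonneg: "\<And>n k y. y \<in> X \<Longrightarrow> 0 \<le> t n k y"
  obtains A K C where "finite A" "finite K" "0 \<le> C"
    and "\<And>y. y \<in> X \<Longrightarrow> cmod (f y) \<le> C * (\<Sum>n\<in>A. \<Sum>k\<in>K. t n k y)"
proof -
  obtain F C where F: "finite F" and C: "0 \<le> C"
    and bound: "\<And>y. y \<in> X \<Longrightarrow> cmod (f y) \<le> C * (\<Sum>i\<in>F. (\<lambda>(n, k). t n k) i y)"
    using assms(1) unfolding seminorm_bounded_def by blast
  have "cmod (f y) \<le> C * (\<Sum>n\<in>fst ` F. \<Sum>k\<in>snd ` F. t n k y)" if y: "y \<in> X" for y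
  proof -
    have "(\<Sum>i\<in>F. (\<lambda>(n, k). t n k) i y) \<le> (\<Sum>i\<in>fst ` F \<times> snd ` F. (\<lambda>(n, k). t n k) i y)"
      using F nonneg[OF y] by (intro sum_mono2) (auto simp: subset_fst_snd)
    also have "\<dots> = (\<Sum>n\<in>fst ` F. \<Sum>k\<in>snd ` F. t n k y)"
      by (simp add: sum.cartesian_product case_prod_beta')
    finally show ?thesis using bound[OF y] C by (meson mult_left_mono order_trans)
  qed
  then show ?thesis using that F C by blast
qed

lemma curry_cfun_simps:
  "curry 0 m = 0" "curry (z1 + z2) m = curry z1 m + curry z2 m"
  "curry (\<lambda>i. c * z i) m = (\<lambda>j. c * curry z m j)"
  by (simp_all add: fun_eq_iff)

(* A point z of the product of the X m is encoded as z :: 'b \<times> 'a \<Rightarrow> complex with m-th component curry z m;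
   Y lies in it diagonally as y \<circ> snd. *)
lemma csubspace_curry_product:
  assumes X: "\<And>m. csubspace (X m)"
  shows "csubspace {z. \<forall>m. curry z m \<in> X m}"
  unfolding csubspace_def
proof (intro conjI ballI allI)
  show "0 \<in> {z. \<forall>m. curry z m \<in> X m}"
    unfolding mem_Collect_eq curry_cfun_simps using csubspace_0[OF X] by blast
  show "x + y \<in> {z. \<forall>m. curry z m \<in> X m}"
    if "x \<in> {z. \<forall>m. curry z m \<in> X m}" "y \<in> {z. \<forall>m. curry z m \<in> X m}" for x y
    using that csubspace_add[OF X] unfolding mem_Collect_eq curry_cfun_simps by blast
  show "(\<lambda>i. c * x i) \<in> {z. \<forall>m. curry z m \<in> X m}" if "x \<in> {z. \<forall>m. curry z m \<in> X m}" for c x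
    using that csubspace_cmult[OF X] unfolding mem_Collect_eq curry_cfun_simps by blast
qed

lemma cseminorm_on_curry_sum:
  assumes X: "\<And>m. csubspace (X m)" and q: "\<And>m. cseminorm_on (X m) (q m)"
  shows "cseminorm_on {z. \<forall>m. curry z m \<in> X m} (\<lambda>z. \<Sum>m\<in>A. q m (curry z m))"
  unfolding cseminorm_on_def
proof (intro conjI ballI allI)
  fix x y assume "x \<in> {z. \<forall>m. curry z m \<in> X m}" "y \<in> {z. \<forall>m. curry z m \<in> X m}"
  then show "(\<Sum>m\<in>A. q m (curry (x + y) m)) \<le> (\<Sum>m\<in>A. q m (curry x m)) + (\<Sum>m\<in>A. q m (curry y m))"
    unfolding sum.distrib[symmetric] curry_cfun_simps
    by (intro sum_mono cseminorm_on_triangle[OF X q]) auto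
next
  fix c x assume "x \<in> {z. \<forall>m. curry z m \<in> X m}"
  then show "(\<Sum>m\<in>A. q m (curry (\<lambda>i. c * x i) m)) = cmod c * (\<Sum>m\<in>A. q m (curry x m))"
    unfolding sum_distrib_left curry_cfun_simps by (simp add: cseminorm_on_cmult[OF X q] del: curry_conv)
qed

lemma csubspace_diagonal:
  assumes Y: "csubspace Y"
  shows "csubspace ((\<lambda>y. y \<circ> snd) ` Y :: ('b \<times> 'a \<Rightarrow> complex) set)"
  unfolding csubspace_def
proof (intro conjI ballI allI)
  have "(0 :: 'b \<times> 'a \<Rightarrow> complex) = 0 \<circ> snd" by (simp add: fun_eq_iff)
  then show "(0 :: 'b \<times> 'a \<Rightarrow> complex) \<in> (\<lambda>y. y \<circ> snd) ` Y" using csubspace_0[OF Y] by blast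
next
  fix x y :: "'b \<times> 'a \<Rightarrow> complex" assume "x \<in> (\<lambda>y. y \<circ> snd) ` Y" "y \<in> (\<lambda>y. y \<circ> snd) ` Y"
  then obtain a b where ab: "a \<in> Y" "b \<in> Y" and "x = a \<circ> snd" "y = b \<circ> snd" by blast
  then have "x + y = (a + b) \<circ> snd" by (simp add: fun_eq_iff)
  then show "x + y \<in> (\<lambda>y. y \<circ> snd) ` Y" using csubspace_add[OF Y ab] by blast
next
  fix c and x :: "'b \<times> 'a \<Rightarrow> complex" assume "x \<in> (\<lambda>y. y \<circ> snd) ` Y"
  then obtain a where a: "a \<in> Y" and "x = a \<circ> snd" by blast
  then have "(\<lambda>i. c * x i) = (\<lambda>j. c * a j) \<circ> snd" by (simp add: fun_eq_iff)
  then show "(\<lambda>i. c * x i) \<in> (\<lambda>y. y \<circ> snd) ` Y" using csubspace_cmult[OF Y a] by blast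
qed

lemma dominated_functional_extend_to_product:
  fixes X :: "nat \<Rightarrow> ('a \<Rightarrow> complex) set" and q :: "nat \<Rightarrow> ('a \<Rightarrow> complex) \<Rightarrow> real"
  assumes X: "\<And>m. csubspace (X m)" and q: "\<And>m. cseminorm_on (X m) (q m)"
    and f: "clinear_on (\<Inter>m. X m) f"
    and f_le: "\<And>y. y \<in> (\<Inter>m. X m) \<Longrightarrow> cmod (f y) \<le> (\<Sum>m\<in>A. q m y)"
  obtains G where "clinear_on {z. \<forall>m. curry z m \<in> X m} G"
    and "\<And>y. y \<in> (\<Inter>m. X m) \<Longrightarrow> G (y \<circ> snd) = f y"
    and "\<And>z. z \<in> {z. \<forall>m. curry z m \<in> X m} \<Longrightarrow> cmod (G z) \<le> (\<Sum>m\<in>A. q m (curry z m))"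
proof -
  define M :: "(nat \<times> 'a \<Rightarrow> complex) set" where "M = (\<lambda>y. y \<circ> snd) ` (\<Inter>m. X m)"
  have curry_M: "curry (y \<circ> snd) m = y" for y :: "'a \<Rightarrow> complex" and m :: nat
    by (simp add: fun_eq_iff)
  have M_iff: "z \<in> M \<longleftrightarrow> (\<exists>y\<in>(\<Inter>m. X m). z = y \<circ> snd)" for z
    unfolding M_def by blast
  have M: "csubspace M"
    unfolding M_def by (rule csubspace_diagonal[OF csubspace_INT[OF X]])
  have "M \<subseteq> {z. \<forall>m. curry z m \<in> X m}" unfolding M_def using curry_M by auto
  have M_Y: "curry z 0 \<in> (\<Inter>m. X m)" if "z \<in> M" for z
    using that unfolding M_iff by (auto simp only: curry_M)
  have f0_lin: "clinear_on M (\<lambda>z. f (curry z 0))"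
    using f M_Y unfolding clinear_on_def curry_cfun_simps by blast
  have f0_le: "cmod (f (curry z 0)) \<le> (\<Sum>m\<in>A. q m (curry z m))" if "z \<in> M" for z
    using that f_le unfolding M_iff by (auto simp only: curry_M)
  obtain G where G_lin: "clinear_on {z. \<forall>m. curry z m \<in> X m} G"
    and G_M: "\<And>z. z \<in> M \<Longrightarrow> G z = f (curry z 0)"
    and G_le: "\<And>z. z \<in> {z. \<forall>m. curry z m \<in> X m} \<Longrightarrow> cmod (G z) \<le> (\<Sum>m\<in>A. q m (curry z m))"
    using complex_hahn_banach[OF csubspace_curry_product[OF X] cseminorm_on_curry_sum[OF X q] M
        \<open>M \<subseteq> {z. \<forall>m. curry z m \<in> X m}\<close> f0_lin f0_le] by blast
  show ?thesis
  proof (rule that[OF G_lin _ G_le])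
    fix y assume "y \<in> (\<Inter>m. X m)"
    then have "y \<circ> snd \<in> M" unfolding M_def by blast
    then show "G (y \<circ> snd) = f y" using G_M curry_M by simp
  qed
qed

definition inj_component :: "'b \<Rightarrow> ('a \<Rightarrow> complex) \<Rightarrow> 'b \<times> 'a \<Rightarrow> complex" where
  "inj_component m y = (\<lambda>i. if fst i = m then y (snd i) else 0)"

lemma curry_inj_component: "curry (inj_component m y) m' = (if m' = m then y else 0)"
  by (simp add: inj_component_def fun_eq_iff)

lemma inj_component_in_product:
  assumes X: "\<And>m. csubspace (X m)" and y: "y \<in> X m"
  shows "inj_component m y \<in> {z. \<forall>m. curry z m \<in> X m}"
  using y csubspace_0[OF X] by (simp add: curry_inj_component)

lemma dominated_product_functional_diagonal:
  assumes X: "\<And>m. csubspace (X m)" and q: "\<And>m. cseminorm_on (X m) (q m)" and A: "finite A"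
    and G: "clinear_on {z. \<forall>m. curry z m \<in> X m} G"
    and G_le: "\<And>z. z \<in> {z. \<forall>m. curry z m \<in> X m} \<Longrightarrow> cmod (G z) \<le> (\<Sum>m\<in>A. q m (curry z m))"
    and y: "y \<in> (\<Inter>m. X m)"
  shows "G (y \<circ> snd) = (\<Sum>m\<in>A. G (inj_component m y))"
proof -
  define V where "V = {z. \<forall>m. curry z m \<in> X m}"
  have V: "csubspace V" unfolding V_def by (rule csubspace_curry_product[OF X])
  \<comment> \<open>the diagonal copy of y minus its components in A has seminorm 0\<close>
  define r where "r = (\<lambda>i. if fst i \<in> A then 0 else y (snd i))"
  have curry_r: "curry r m = (if m \<in> A then 0 else y)" for m
    by (simp add: r_def fun_eq_iff)
  have "r \<in> V" using y csubspace_0[OF X] unfolding V_def by (simp add: curry_r)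
  moreover have "(\<Sum>m\<in>A. q m (curry r m)) = 0"
    unfolding curry_r using cseminorm_on_0[OF X q] by (intro sum.neutral) simp
  ultimately have "G r = 0" using G_le unfolding V_def by fastforce
  have "y \<circ> snd = (\<Sum>m\<in>A. inj_component m y) + r"
    using A by (simp add: fun_eq_iff sum_fun_apply inj_component_def r_def)
  moreover have inj_y: "inj_component m y \<in> V" for m
    using y inj_component_in_product[where X=X, OF X] unfolding V_def by blast
  moreover have "(\<Sum>m\<in>A. inj_component m y) \<in> V" by (rule csubspace_sum[OF V inj_y])
  ultimately have "G (y \<circ> snd) = G (\<Sum>m\<in>A. inj_component m y) + G r"
    using G \<open>r \<in> V\<close> unfolding clinear_on_def V_def by simp
  then show ?thesis
    using \<open>G r = 0\<close> clinear_on_sum[OF V G[folded V_def] inj_y] by simp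
qed

theorem dominated_functional_INT_decompose:
  fixes X :: "nat \<Rightarrow> ('a \<Rightarrow> complex) set" and q :: "nat \<Rightarrow> ('a \<Rightarrow> complex) \<Rightarrow> real"
  assumes X: "\<And>m. csubspace (X m)" and q: "\<And>m. cseminorm_on (X m) (q m)"
    and A: "finite A" and f: "clinear_on (\<Inter>m. X m) f"
    and f_le: "\<And>y. y \<in> (\<Inter>m. X m) \<Longrightarrow> cmod (f y) \<le> (\<Sum>m\<in>A. q m y)"
  obtains g where "\<And>m. clinear_on (X m) (g m)" and "\<And>m y. y \<in> X m \<Longrightarrow> cmod (g m y) \<le> q m y"
    and "\<And>y. y \<in> (\<Inter>m. X m) \<Longrightarrow> f y = (\<Sum>m\<in>A. g m y)"
proof -
  obtain G where G: "clinear_on {z. \<forall>m. curry z m \<in> X m} G"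
    and G_diag: "\<And>y. y \<in> (\<Inter>m. X m) \<Longrightarrow> G (y \<circ> snd) = f y"
    and G_le: "\<And>z. z \<in> {z. \<forall>m. curry z m \<in> X m} \<Longrightarrow> cmod (G z) \<le> (\<Sum>m\<in>A. q m (curry z m))"
    using dominated_functional_extend_to_product[OF X q f f_le] by blast
  define V where "V = {z :: nat \<times> 'a \<Rightarrow> complex. \<forall>m. curry z m \<in> X m}"
  have inj_V: "inj_component m y \<in> V" if "y \<in> X m" for m y
    unfolding V_def by (rule inj_component_in_product[where X=X, OF X that])
  define g where "g m y = G (inj_component m y)" for m y
  have "clinear_on (X m) (g m)" for m
  proof -
    have "inj_component m (x + y) = inj_component m x + inj_component m y"
      and "inj_component m (\<lambda>j. c * x j) = (\<lambda>i. c * inj_component m x i)"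
      for x y :: "'a \<Rightarrow> complex" and c
      by (simp_all add: inj_component_def fun_eq_iff)
    then show ?thesis
      using G[folded V_def] inj_V unfolding clinear_on_def g_def by simp
  qed
  moreover have "cmod (g m y) \<le> q m y" if "y \<in> X m" for m y
  proof -
    have "(\<Sum>m'\<in>A. q m' (curry (inj_component m y) m')) = (\<Sum>m'\<in>A. if m' = m then q m y else 0)"
      unfolding curry_inj_component using cseminorm_on_0[OF X q] by (intro sum.cong) auto
    also have "\<dots> \<le> q m y" using A cseminorm_on_nonneg[OF X q that] by simp
    finally show ?thesis
      using G_le[folded V_def, OF inj_V[OF that]] unfolding g_def by linarith
  qed
  moreover have "f y = (\<Sum>m\<in>A. g m y)" if "y \<in> (\<Inter>m. X m)" for y
    using dominated_product_functional_diagonal[OF X q A G G_le that] G_diag[OF that]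
    unfolding g_def by (simp only:)
  ultimately show ?thesis using that by blast
qed

context
  fixes X :: "nat \<Rightarrow> seqc set" and s :: "nat \<Rightarrow> 'i \<Rightarrow> seqc \<Rightarrow> real"
  assumes X: "\<And>m. csubspace (X m)" and s: "\<And>m k. cseminorm_on (X m) (s m k)"
begin

lemma cseminorm_on_INT: "cseminorm_on (\<Inter>m. X m) ((\<lambda>(n, k). s n k) i)"
proof -
  obtain m k where "i = (m, k)" by fastforce
  then show ?thesis using cseminorm_on_subset[OF s[of m k], of "\<Inter>m. X m"] by auto
qed

lemma limitin_FKtop_INT_iff:
  assumes u: "\<And>n. u n \<in> (\<Inter>m. X m)"
  shows "limitin (FKtop (\<Inter>m. X m) (\<lambda>(n, k). s n k)) u x sequentially \<longleftrightarrow>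
    (\<forall>m. limitin (FKtop (X m) (s m)) u x sequentially)"
proof -
  have "limitin (FKtop (X m) (s m)) u x sequentially \<longleftrightarrow>
      x \<in> X m \<and> (\<forall>k. (\<lambda>n. s m k (u n - x)) \<longlonglongrightarrow> 0)" for m
    using limitin_FKtop_iff[where X="X m" and s="s m", OF X s] u by blast
  moreover have "limitin (FKtop (\<Inter>m. X m) (\<lambda>(n, k). s n k)) u x sequentially \<longleftrightarrow>
      x \<in> (\<Inter>m. X m) \<and> (\<forall>i. (\<lambda>n. (\<lambda>(n, k). s n k) i (u n - x)) \<longlonglongrightarrow> 0)"
    using limitin_FKtop_iff[where X="\<Inter>m. X m" and s="\<lambda>(n, k). s n k",
        OF csubspace_INT[OF X] cseminorm_on_INT] u by blast
  ultimately show ?thesis by (auto simp: split_paired_All)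
qed

lemma FK_dual_INT_if_FK_dual:
  assumes g: "g \<in> FK_dual (X m) (s m)"
  shows "g \<in> FK_dual (\<Inter>m. X m) (\<lambda>(n, k). s n k)"
proof -
  have "clinear_on (X m) g" and "seminorm_bounded (X m) (s m) g"
    using g FK_dual_iff_seminorm_bounded[where X="X m" and s="s m", OF X s] by auto
  then obtain F C where F: "finite F" "0 \<le> C" and bound: "\<forall>y\<in>X m. cmod (g y) \<le> C * (\<Sum>k\<in>F. s m k y)"
    unfolding seminorm_bounded_def by blast
  have "(\<Sum>i\<in>Pair m ` F. (\<lambda>(n, k). s n k) i y) = (\<Sum>k\<in>F. s m k y)" for y
    by (simp add: sum.reindex inj_on_def)
  then have "seminorm_bounded (\<Inter>m. X m) (\<lambda>(n, k). s n k) g"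
    unfolding seminorm_bounded_def using F bound by (intro exI[of _ "Pair m ` F"] exI[of _ C]) auto
  moreover have "clinear_on (\<Inter>m. X m) g"
    using \<open>clinear_on (X m) g\<close> by (rule clinear_on_subset) blast
  ultimately show ?thesis
    using FK_dual_iff_seminorm_bounded[where X="\<Inter>m. X m" and s="\<lambda>(n, k). s n k",
        OF csubspace_INT[OF X] cseminorm_on_INT] by blast
qed

lemma FK_dual_INT_decompose:
  assumes f: "f \<in> FK_dual (\<Inter>m. X m) (\<lambda>(n, k). s n k)"
  obtains A g where "finite A" and "\<And>m. g m \<in> FK_dual (X m) (s m)"
    and "\<And>y. y \<in> (\<Inter>m. X m) \<Longrightarrow> f y = (\<Sum>m\<in>A. g m y)"
proof -
  have Y: "csubspace (\<Inter>m. X m)" by (rule csubspace_INT) (rule X)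
  have f_lin: "clinear_on (\<Inter>m. X m) f" and f_bdd: "seminorm_bounded (\<Inter>m. X m) (\<lambda>(n, k). s n k) f"
    using f FK_dual_iff_seminorm_bounded[where X="\<Inter>m. X m" and s="\<lambda>(n, k). s n k",
        OF Y cseminorm_on_INT] by auto
  have nonneg: "0 \<le> s n k y" if "y \<in> (\<Inter>m. X m)" for n k y
    using cseminorm_on_nonneg[OF X[of n] s[of n k]] that by blast
  obtain A K C where A: "finite A" and K: "finite K" and C: "0 \<le> C"
    and bound: "\<And>y. y \<in> (\<Inter>m. X m) \<Longrightarrow> cmod (f y) \<le> C * (\<Sum>n\<in>A. \<Sum>k\<in>K. s n k y)"
    using seminorm_bounded_pair_index[where t=s, OF f_bdd nonneg] by metis
  define q where "q m y = C * (\<Sum>k\<in>K. s m k y)" for m y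
  have q: "cseminorm_on (X m) (q m)" for m
    unfolding q_def[abs_def] by (rule cseminorm_on_scaled_sum[where s="s m", OF C s])
  have "cmod (f y) \<le> (\<Sum>m\<in>A. q m y)" if "y \<in> (\<Inter>m. X m)" for y
    using bound[OF that] by (simp add: q_def sum_distrib_left)
  then obtain g where g_lin: "\<And>m. clinear_on (X m) (g m)"
    and g_le: "\<And>m y. y \<in> X m \<Longrightarrow> cmod (g m y) \<le> q m y"
    and g_sum: "\<And>y. y \<in> (\<Inter>m. X m) \<Longrightarrow> f y = (\<Sum>m\<in>A. g m y)"
    using dominated_functional_INT_decompose[where X=X and q=q, OF X q A f_lin] by metis
  have "seminorm_bounded (X m) (s m) (g m)" for m
    unfolding seminorm_bounded_def using K C g_le by (intro exI[of _ K] exI[of _ C]) (simp add: q_def)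
  then have "g m \<in> FK_dual (X m) (s m)" for m
    using g_lin FK_dual_iff_seminorm_bounded[where X="X m" and s="s m", OF X s] by blast
  then show ?thesis using that A g_sum by blast
qed

(* R a l stands for "a tends to l", "a converges" or "a is bounded". *)
lemma FK_dual_property_INT:
  assumes T: "\<And>n x. T n x \<in> (\<Inter>m. X m)"
    and R_sum: "\<And>(A :: nat set) a l. finite A \<Longrightarrow> (\<And>i. i \<in> A \<Longrightarrow> R (a i) (l i)) \<Longrightarrow>
      R (\<lambda>n. \<Sum>i\<in>A. a i n) (\<Sum>i\<in>A. l i)"
  shows "{x \<in> (\<Inter>m. X m). \<forall>f\<in>FK_dual (\<Inter>m. X m) (\<lambda>(n, k). s n k). R (\<lambda>n. f (T n x)) (f x)} =
    (\<Inter>m. {x \<in> X m. \<forall>g\<in>FK_dual (X m) (s m). R (\<lambda>n. g (T n x)) (g x)})"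
proof (intro equalityI subsetI)
  fix x assume "x \<in> {x \<in> (\<Inter>m. X m). \<forall>f\<in>FK_dual (\<Inter>m. X m) (\<lambda>(n, k). s n k). R (\<lambda>n. f (T n x)) (f x)}"
  then show "x \<in> (\<Inter>m. {x \<in> X m. \<forall>g\<in>FK_dual (X m) (s m). R (\<lambda>n. g (T n x)) (g x)})"
    using FK_dual_INT_if_FK_dual by blast
next
  fix x assume x: "x \<in> (\<Inter>m. {x \<in> X m. \<forall>g\<in>FK_dual (X m) (s m). R (\<lambda>n. g (T n x)) (g x)})"
  have "R (\<lambda>n. f (T n x)) (f x)" if f: "f \<in> FK_dual (\<Inter>m. X m) (\<lambda>(n, k). s n k)" for f
  proof -
    obtain A g where A: "finite A" and g: "\<And>m. g m \<in> FK_dual (X m) (s m)"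
      and f_sum: "\<And>y. y \<in> (\<Inter>m. X m) \<Longrightarrow> f y = (\<Sum>m\<in>A. g m y)"
      using FK_dual_INT_decompose[OF f] by metis
    have "R (\<lambda>n. \<Sum>m\<in>A. g m (T n x)) (\<Sum>m\<in>A. g m x)"
      using x g by (intro R_sum[OF A]) blast
    then show ?thesis using x T f_sum by simp
  qed
  then show "x \<in> {x \<in> (\<Inter>m. X m). \<forall>f\<in>FK_dual (\<Inter>m. X m) (\<lambda>(n, k). s n k). R (\<lambda>n. f (T n x)) (f x)}"
    using x by blast
qed

end

lemma FK_space_imp_csubspace: "FK_space X s \<Longrightarrow> csubspace X"
  by (simp add: FK_space_def csubspace_def)

lemma FK_space_imp_cseminorm_on: "FK_space X s \<Longrightarrow> cseminorm_on X (s i)"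
  by (simp add: FK_space_def cseminorm_on_def)

lemma Tmean_in_phi: "Tmean p q n x \<in> phi"
proof -
  have "{j. Tmean p q n x j \<noteq> 0} \<subseteq> {..<q n}"
    by (auto simp: Tmean_def sect_def not_less intro!: sum.neutral)
  then show ?thesis unfolding phi_def by (auto intro: finite_subset)
qed

lemma bounded_range_sum:
  fixes a :: "'i \<Rightarrow> nat \<Rightarrow> 'a::real_normed_vector"
  shows "(\<And>i. i \<in> A \<Longrightarrow> bounded (range (a i))) \<Longrightarrow> bounded (range (\<lambda>n. \<Sum>i\<in>A. a i n))"
proof (induction A rule: infinite_finite_induct)
  case (insert i A)
  then show ?case by (simp add: bounded_plus_comp)
qed simp_all

theorem mainTheorem18:
  fixes X :: "nat \<Rightarrow> seqc set"
    and s :: "nat \<Rightarrow> 'i::countable \<Rightarrow> seqc \<Rightarrow> real"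
    and p q :: "nat \<Rightarrow> nat"
  assumes FK: "\<And>n. FK_space (X n) (s n)"
    and phi: "\<And>n. phi \<subseteq> X n"
    and pq: "\<And>n. p n < q n"
    and qinf: "filterlim q at_top sequentially"
  defines "Y \<equiv> (\<Inter>n. X n)"
    and "sY \<equiv> (\<lambda>(n, k). s n k)"
  shows "DS p q Y sY = (\<Inter>n. DS p q (X n) (s n)) \<and>
         DW p q Y sY = (\<Inter>n. DW p q (X n) (s n)) \<and>
         DF p q Y sY = (\<Inter>n. DF p q (X n) (s n)) \<and>
         DB p q Y sY = (\<Inter>n. DB p q (X n) (s n))"
proof -
  have X: "csubspace (X m)" for m using FK_space_imp_csubspace[OF FK] .
  have s: "cseminorm_on (X m) (s m k)" for m k using FK_space_imp_cseminorm_on[OF FK] .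
  have T: "Tmean p q n x \<in> (\<Inter>m. X m)" for n x
    using Tmean_in_phi phi by blast
  have "limitin (FKtop Y sY) (\<lambda>n. Tmean p q n x) x sequentially \<longleftrightarrow>
      (\<forall>m. limitin (FKtop (X m) (s m)) (\<lambda>n. Tmean p q n x) x sequentially)" for x
    unfolding Y_def sY_def by (rule limitin_FKtop_INT_iff[where X=X and s=s, OF X s T])
  then have "DS p q Y sY = (\<Inter>n. DS p q (X n) (s n))"
    unfolding DS_def Y_def by auto
  moreover have "DW p q Y sY = (\<Inter>n. DW p q (X n) (s n))"
    unfolding DW_def Y_def sY_def
    by (rule FK_dual_property_INT[where X=X and s=s and T="Tmean p q" and R="\<lambda>a l. a \<longlonglongrightarrow> l",
          OF X s T tendsto_sum])
  moreover have "DF p q Y sY = (\<Inter>n. DF p q (X n) (s n))"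
    unfolding DF_def Y_def sY_def
    by (rule FK_dual_property_INT[where X=X and s=s and T="Tmean p q" and R="\<lambda>a l. convergent a",
          OF X s T convergent_sum])
  moreover have "DB p q Y sY = (\<Inter>n. DB p q (X n) (s n))"
    unfolding DB_def Y_def sY_def
    by (rule FK_dual_property_INT[where X=X and s=s and T="Tmean p q" and R="\<lambda>a l. bounded (range a)",
          OF X s T bounded_range_sum])
  ultimately show ?thesis by blast
qed

end
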